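(* Let $u$ be a real solution of the sinh-Gordon equation, fix $a\in\mathbb{C}^*$, let $\psi^{(a)}$ be a solution of (Ψ) and $\varphi^{(a)}$ a solution of (Φ), both at $\lambda=a$, and set $\xi_{ij}=\psi^{(a)}_i\varphi^{(a)}_j$ and $\dot u=\xi_{11}-\xi_{22}$. Let $\lambda\in\mathbb{C}^*\setminus\{a\}$ and let $\psi$ be any solution of (Ψ) at $\lambda$. Then $$\dot\psi:=\frac{1}{\lambda-a}\begin{pmatrix}(\lambda+a)\xi_{11}&2\lambda\,\xi_{12}\\ 2a\,\xi_{21}&(\lambda+a)\xi_{22}\end{pmatrix}\psi$$ solves the linearization of (Ψ) in the direction $\dot u$, namely $$\partial\dot\psi=\tfrac12\begin{pmatrix}\partial u& ie^{-u}\\ i\lambda^{-1}e^{u}&-\partial u\end{pmatrix}\dot\psi+\tfrac12\begin{pmatrix}\partial\dot u&-i\dot u e^{-u}\\ i\dot u\lambda^{-1}e^{u}&-\partial\dot u\end{pmatrix}\psi,$$ $$\bar\partial\dot\psi=\tfrac12\begin{pmatrix}-\bar\partial u& i\lambda e^{u}\\ ie^{-u}&\bar\partial u\end{pmatrix}\dot\psi+\tfrac12\begin{pmatrix}-\bar\partial\dot u& i\dot u\lambda e^{u}\\ -i\dot u e^{-u}&\bar\partial\dot u\end{pmatrix}\psi.$$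
   Context: Coordinates $z$ on $\mathbb{R}^2\cong\mathbb{C}$, $\partial=\partial_z$, $\bar\partial=\partial_{\bar z}$. Sinh-Gordon equation: $\partial\bar\partial u+\tfrac12\sinh(2u)=0$, $u$ real smooth. For $\lambda\in\mathbb{C}^*$, system (Ψ) is $\partial\psi=\tfrac12\begin{pmatrix}\partial u& ie^{-u}\\ i\lambda^{-1}e^{u}&-\partial u\end{pmatrix}\psi$, $\bar\partial\psi=\tfrac12\begin{pmatrix}-\bar\partial u& i\lambda e^{u}\\ ie^{-u}&\bar\partial u\end{pmatrix}\psi$, and system (Φ) is $\partial\varphi=-\tfrac12\begin{pmatrix}\partial u& i\lambda^{-1}e^{u}\\ ie^{-u}&-\partial u\end{pmatrix}\varphi$, $\bar\partial\varphi=-\tfrac12\begin{pmatrix}-\bar\partial u& ie^{-u}\\ i\lambda e^{u}&\bar\partial u\end{pmatrix}\varphi$. *)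

theory Defs
  imports "HOL-Analysis.Analysis"
begin

text \<open>We identify R^2 with the complex plane. Partial derivatives in the
real directions x and y, via the (real) Frechet derivative.\<close>

definition pdx :: "(complex \<Rightarrow> 'a::real_normed_vector) \<Rightarrow> complex \<Rightarrow> 'a" where
  "pdx f z = frechet_derivative f (at z) 1"

definition pdy :: "(complex \<Rightarrow> 'a::real_normed_vector) \<Rightarrow> complex \<Rightarrow> 'a" where
  "pdy f z = frechet_derivative f (at z) \<i>"

fun iter_pd :: "bool list \<Rightarrow> (complex \<Rightarrow> 'a::real_normed_vector) \<Rightarrow> complex \<Rightarrow> 'a" where
  "iter_pd [] f = f"
| "iter_pd (b # bs) f = (if b then pdx else pdy) (iter_pd bs f)"

definition smooth_plane :: "(complex \<Rightarrow> 'a::real_normed_vector) \<Rightarrow> bool" where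
  "smooth_plane f \<longleftrightarrow> (\<forall>ws z. iter_pd ws f differentiable (at z))"

definition wd :: "(complex \<Rightarrow> complex) \<Rightarrow> complex \<Rightarrow> complex" where
  "wd f z = (pdx f z - \<i> * pdy f z) / 2"

definition wdb :: "(complex \<Rightarrow> complex) \<Rightarrow> complex \<Rightarrow> complex" where
  "wdb f z = (pdx f z + \<i> * pdy f z) / 2"

definition cu :: "(complex \<Rightarrow> real) \<Rightarrow> complex \<Rightarrow> complex" where
  "cu u z = complex_of_real (u z)"

definition sinh_gordon :: "(complex \<Rightarrow> real) \<Rightarrow> bool" where
  "sinh_gordon u \<longleftrightarrow> smooth_plane u \<and>
     (\<forall>z. wd (wdb (cu u)) z + complex_of_real (sinh (2 * u z)) / 2 = 0)"

definition solves_Psi :: "(complex \<Rightarrow> real) \<Rightarrow> complex \<Rightarrow> (complex \<Rightarrow> complex) \<Rightarrow> (complex \<Rightarrow> complex) \<Rightarrow> bool" where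
  "solves_Psi u lam p1 p2 \<longleftrightarrow>
     (\<forall>z. p1 differentiable (at z) \<and> p2 differentiable (at z)) \<and>
     (\<forall>z. let U = cu u; ep = exp (U z); em = exp (- U z) in
        wd p1 z = (wd U z * p1 z + \<i> * em * p2 z) / 2 \<and>
        wd p2 z = (\<i> * inverse lam * ep * p1 z - wd U z * p2 z) / 2 \<and>
        wdb p1 z = (- wdb U z * p1 z + \<i> * lam * ep * p2 z) / 2 \<and>
        wdb p2 z = (\<i> * em * p1 z + wdb U z * p2 z) / 2)"

definition solves_Phi :: "(complex \<Rightarrow> real) \<Rightarrow> complex \<Rightarrow> (complex \<Rightarrow> complex) \<Rightarrow> (complex \<Rightarrow> complex) \<Rightarrow> bool" where
  "solves_Phi u lam f1 f2 \<longleftrightarrow>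
     (\<forall>z. f1 differentiable (at z) \<and> f2 differentiable (at z)) \<and>
     (\<forall>z. let U = cu u; ep = exp (U z); em = exp (- U z) in
        wd f1 z = - (wd U z * f1 z + \<i> * inverse lam * ep * f2 z) / 2 \<and>
        wd f2 z = - (\<i> * em * f1 z - wd U z * f2 z) / 2 \<and>
        wdb f1 z = - (- wdb U z * f1 z + \<i> * em * f2 z) / 2 \<and>
        wdb f2 z = - (\<i> * lam * ep * f1 z + wdb U z * f2 z) / 2)"

end

theory Submission
  imports Defs
begin

(* Write (Psi) at spectral parameter lam as d psi = A_lam psi / 2, dbar psi = B_lam psi / 2.
   System (Phi) at a reads d phi = - A_a^T phi / 2, dbar phi = - B_a^T phi / 2, so the
   matrix xi = psi^(a) phi^(a)^T satisfies the Lax equations d xi = [A_a, xi] / 2 and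
   dbar xi = [B_a, xi] / 2.  The matrix M with psi-dot = M psi recombines the entries of
   xi so that these turn into d M = ([A_lam, M] + A-dot) / 2, dbar M = ([B_lam, M] + B-dot) / 2,
   where A-dot, B-dot are the derivatives of A_lam, B_lam in the direction
   u-dot = xi_11 - xi_22.  By the product rule,
   d (M psi) = (d M) psi + M A_lam psi / 2 = A_lam (M psi) / 2 + A-dot psi / 2, and likewise
   for dbar. *)

lemma wirtinger_has_derivative:
  assumes "(f has_derivative f') (at z)"
  shows "wd f z = (f' 1 - \<i> * f' \<i>) / 2" "wdb f z = (f' 1 + \<i> * f' \<i>) / 2"
  by (simp_all add: wd_def wdb_def pdx_def pdy_def frechet_derivative_at[OF assms, symmetric])

lemmas wirtinger_frechet = wd_def[unfolded pdx_def pdy_def] wdb_def[unfolded pdx_def pdy_def]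

lemma wd_const: "wd (\<lambda>x. c) z = 0" "wdb (\<lambda>x. c) z = 0"
  by (simp_all add: wirtinger_has_derivative[OF has_derivative_const])

lemma wd_add:
  assumes "f differentiable (at z)" "g differentiable (at z)"
  shows "wd (\<lambda>x. f x + g x) z = wd f z + wd g z" "wdb (\<lambda>x. f x + g x) z = wdb f z + wdb g z"
  using wirtinger_has_derivative[OF has_derivative_add[OF assms[unfolded frechet_derivative_works]]]
  unfolding wirtinger_frechet[of f] wirtinger_frechet[of g]
  by (simp_all add: algebra_simps add_divide_distrib diff_divide_distrib)

lemma wd_diff:
  assumes "f differentiable (at z)" "g differentiable (at z)"
  shows "wd (\<lambda>x. f x - g x) z = wd f z - wd g z" "wdb (\<lambda>x. f x - g x) z = wdb f z - wdb g z"
  using wirtinger_has_derivative[OF has_derivative_diff[OF assms[unfolded frechet_derivative_works]]]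
  unfolding wirtinger_frechet[of f] wirtinger_frechet[of g]
  by (simp_all add: algebra_simps add_divide_distrib diff_divide_distrib)

lemma wd_mult:
  assumes "f differentiable (at z)" "g differentiable (at z)"
  shows "wd (\<lambda>x. f x * g x) z = f z * wd g z + wd f z * g z"
    "wdb (\<lambda>x. f x * g x) z = f z * wdb g z + wdb f z * g z"
  using wirtinger_has_derivative[OF has_derivative_mult[OF assms[unfolded frechet_derivative_works]]]
  unfolding wirtinger_frechet[of f] wirtinger_frechet[of g]
  by (simp_all add: algebra_simps add_divide_distrib diff_divide_distrib)

(* Entrywise form of d M = ([A_lam, M] + A-dot) / 2 and dbar M = ([B_lam, M] + B-dot) / 2
   for M = (m11, m12; m21, m22), with u-dot = ud. *)
definition lax_Psi ::
  "(complex \<Rightarrow> real) \<Rightarrow> complex \<Rightarrow> (complex \<Rightarrow> complex) \<Rightarrow>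
   (complex \<Rightarrow> complex) \<Rightarrow> (complex \<Rightarrow> complex) \<Rightarrow> (complex \<Rightarrow> complex) \<Rightarrow> (complex \<Rightarrow> complex) \<Rightarrow> bool"
where
  "lax_Psi u lam ud m11 m12 m21 m22 \<longleftrightarrow>
     (\<forall>z. let U = cu u; ep = exp (U z); em = exp (- U z) in
        wd m11 z = (\<i> * em * m21 z - \<i> * inverse lam * ep * m12 z + wd ud z) / 2 \<and>
        wd m12 z = (2 * wd U z * m12 z + \<i> * em * (m22 z - m11 z) - \<i> * ud z * em) / 2 \<and>
        wd m21 z = (\<i> * inverse lam * ep * (m11 z - m22 z) - 2 * wd U z * m21 z
                    + \<i> * ud z * inverse lam * ep) / 2 \<and>
        wd m22 z = (\<i> * inverse lam * ep * m12 z - \<i> * em * m21 z - wd ud z) / 2 \<and>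
        wdb m11 z = (\<i> * lam * ep * m21 z - \<i> * em * m12 z - wdb ud z) / 2 \<and>
        wdb m12 z = (- 2 * wdb U z * m12 z + \<i> * lam * ep * (m22 z - m11 z) + \<i> * ud z * lam * ep) / 2 \<and>
        wdb m21 z = (\<i> * em * (m11 z - m22 z) + 2 * wdb U z * m21 z - \<i> * ud z * em) / 2 \<and>
        wdb m22 z = (\<i> * em * m12 z - \<i> * lam * ep * m21 z + wdb ud z) / 2)"

lemma lax_Psi_tensor_product:
  assumes Psi: "solves_Psi u a p1 p2" and Phi: "solves_Phi u a f1 f2"
  shows "lax_Psi u a (\<lambda>_. 0) (\<lambda>z. p1 z * f1 z) (\<lambda>z. p1 z * f2 z) (\<lambda>z. p2 z * f1 z) (\<lambda>z. p2 z * f2 z)"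
proof -
  note Psi_eqs = Psi[unfolded solves_Psi_def Let_def] and Phi_eqs = Phi[unfolded solves_Phi_def Let_def]
  show ?thesis
    unfolding lax_Psi_def Let_def
    by (simp add: wd_mult wd_const Psi_eqs Phi_eqs) (simp add: algebra_simps diff_divide_distrib)
qed

lemma lax_Psi_spectral_shift:
  assumes lax: "lax_Psi u a (\<lambda>_. 0) x11 x12 x21 x22"
    and D: "\<And>z. x11 differentiable (at z)" "\<And>z. x12 differentiable (at z)"
      "\<And>z. x21 differentiable (at z)" "\<And>z. x22 differentiable (at z)"
    and "a \<noteq> 0" "lam \<noteq> 0" "lam \<noteq> a"
  shows "lax_Psi u lam (\<lambda>z. x11 z - x22 z)
    (\<lambda>z. (lam + a) / (lam - a) * x11 z) (\<lambda>z. 2 * lam / (lam - a) * x12 z)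
    (\<lambda>z. 2 * a / (lam - a) * x21 z) (\<lambda>z. (lam + a) / (lam - a) * x22 z)"
proof -
  note lax_eqs = lax[unfolded lax_Psi_def Let_def]
  have "lam - a \<noteq> 0" using assms by simp
  then show ?thesis
    unfolding lax_Psi_def Let_def
    by (simp only: wd_mult wd_diff wd_const D differentiable_const lax_eqs)
      (intro allI conjI; simp add: divide_simps assms; algebra)
qed

definition solves_linearized_Psi ::
  "(complex \<Rightarrow> real) \<Rightarrow> complex \<Rightarrow> (complex \<Rightarrow> complex) \<Rightarrow> (complex \<Rightarrow> complex) \<Rightarrow>
   (complex \<Rightarrow> complex) \<Rightarrow> (complex \<Rightarrow> complex) \<Rightarrow> (complex \<Rightarrow> complex) \<Rightarrow> bool"
where
  "solves_linearized_Psi u lam ud p1 p2 d1 d2 \<longleftrightarrow>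
    (\<forall>z. d1 differentiable (at z) \<and> d2 differentiable (at z)) \<and>
    (\<forall>z. let U = cu u; ep = exp (U z); em = exp (- U z) in
      wd d1 z = (wd U z * d1 z + \<i> * em * d2 z) / 2
                 + (wd ud z * p1 z - \<i> * ud z * em * p2 z) / 2 \<and>
      wd d2 z = (\<i> * inverse lam * ep * d1 z - wd U z * d2 z) / 2
                 + (\<i> * ud z * inverse lam * ep * p1 z - wd ud z * p2 z) / 2 \<and>
      wdb d1 z = (- wdb U z * d1 z + \<i> * lam * ep * d2 z) / 2
                 + (- wdb ud z * p1 z + \<i> * ud z * lam * ep * p2 z) / 2 \<and>
      wdb d2 z = (\<i> * em * d1 z + wdb U z * d2 z) / 2
                 + (- \<i> * ud z * em * p1 z + wdb ud z * p2 z) / 2)"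

lemma solves_linearized_Psi_lax:
  assumes lax: "lax_Psi u lam ud m11 m12 m21 m22"
    and D: "\<And>z. m11 differentiable (at z)" "\<And>z. m12 differentiable (at z)"
      "\<And>z. m21 differentiable (at z)" "\<And>z. m22 differentiable (at z)"
    and Psi: "solves_Psi u lam p1 p2"
  shows "solves_linearized_Psi u lam ud p1 p2
    (\<lambda>z. m11 z * p1 z + m12 z * p2 z) (\<lambda>z. m21 z * p1 z + m22 z * p2 z)"
proof -
  note lax_eqs = lax[unfolded lax_Psi_def Let_def] and Psi_eqs = Psi[unfolded solves_Psi_def Let_def]
  have DP: "p1 differentiable (at z)" "p2 differentiable (at z)" for z
    using Psi unfolding solves_Psi_def by auto
  show ?thesis
    unfolding solves_linearized_Psi_def Let_def
    by (simp only: wd_mult wd_add D DP differentiable_mult differentiable_add lax_eqs Psi_eqs simp_thms)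
      (intro allI conjI; simp add: algebra_simps add_divide_distrib diff_divide_distrib)
qed

theorem proposition3:
  fixes u :: "complex \<Rightarrow> real" and a lam :: complex
    and psa1 psa2 pha1 pha2 ps1 ps2 :: "complex \<Rightarrow> complex"
  assumes SG: "sinh_gordon u"
    and a0: "a \<noteq> 0"
    and PSa: "solves_Psi u a psa1 psa2"
    and PHa: "solves_Phi u a pha1 pha2"
    and l0: "lam \<noteq> 0" and la: "lam \<noteq> a"
    and PS: "solves_Psi u lam ps1 ps2"
  defines "ud \<equiv> \<lambda>z. psa1 z * pha1 z - psa2 z * pha2 z"
    and "pd1 \<equiv> \<lambda>z. ((lam + a) * (psa1 z * pha1 z) * ps1 z + 2 * lam * (psa1 z * pha2 z) * ps2 z) / (lam - a)"
    and "pd2 \<equiv> \<lambda>z. (2 * a * (psa2 z * pha1 z) * ps1 z + (lam + a) * (psa2 z * pha2 z) * ps2 z) / (lam - a)"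
  shows "(\<forall>z. pd1 differentiable (at z) \<and> pd2 differentiable (at z)) \<and>
    (\<forall>z. let U = cu u; ep = exp (U z); em = exp (- U z) in
      wd pd1 z = (wd U z * pd1 z + \<i> * em * pd2 z) / 2
                 + (wd ud z * ps1 z - \<i> * ud z * em * ps2 z) / 2 \<and>
      wd pd2 z = (\<i> * inverse lam * ep * pd1 z - wd U z * pd2 z) / 2
                 + (\<i> * ud z * inverse lam * ep * ps1 z - wd ud z * ps2 z) / 2 \<and>
      wdb pd1 z = (- wdb U z * pd1 z + \<i> * lam * ep * pd2 z) / 2
                 + (- wdb ud z * ps1 z + \<i> * ud z * lam * ep * ps2 z) / 2 \<and>
      wdb pd2 z = (\<i> * em * pd1 z + wdb U z * pd2 z) / 2
                 + (- \<i> * ud z * em * ps1 z + wdb ud z * ps2 z) / 2)"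
proof -
  have D: "psa1 differentiable (at z)" "psa2 differentiable (at z)"
      "pha1 differentiable (at z)" "pha2 differentiable (at z)" for z
    using PSa PHa unfolding solves_Psi_def solves_Phi_def by auto
  have pd: "pd1 = (\<lambda>z. (lam + a) / (lam - a) * (psa1 z * pha1 z) * ps1 z
                           + 2 * lam / (lam - a) * (psa1 z * pha2 z) * ps2 z)"
                "pd2 = (\<lambda>z. 2 * a / (lam - a) * (psa2 z * pha1 z) * ps1 z
                           + (lam + a) / (lam - a) * (psa2 z * pha2 z) * ps2 z)"
    unfolding pd1_def pd2_def using la by (simp_all add: fun_eq_iff divide_simps)
  have "solves_linearized_Psi u lam ud ps1 ps2 pd1 pd2"
    unfolding pd ud_def
    by (rule solves_linearized_Psi_lax[OF lax_Psi_spectral_shift[OF lax_Psi_tensor_product[OF PSa PHa]] _ _ _ _ PS])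
      (simp_all add: D a0 l0 la)
  then show ?thesis
    unfolding solves_linearized_Psi_def .
qed

end
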